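(* Let $t\in\Lambda_s$ be a simple term such that $t\frown t$. Then $t$ is in $\mathsf{r}$-normal form if and only if $t$ is a resource approximant.
   Context: Call-by-value resource calculus. Resource values $u,v::=x\mid \lambda x.t$; simple terms $s,t::= st\mid [v_1,\dots,v_k]$ ($k\ge0$, bags are finite multisets); $\Lambda_s$ is the set of simple terms. The reduction $\to_{\mathsf{r}}$ is the contextual closure (extended to finite sets of terms) of the rules: $(\beta_r)$ $[\lambda x.t][v_1,\dots,v_n]\to t\langle v_1,\dots,v_n/x\rangle$ (the set of all ways of linearly substituting the $v_i$ for the free occurrences of $x$, empty if the number of occurrences differs from $n$); $(0)$ $[v_1,\dots,v_n]\,t\to\emptyset$ when $n\neq1$; $(\sigma_1)$ $[\lambda x.t]s_1s_2\to[\lambda x.ts_2]s_1$ if $x\notin FV(s_1)$; $(\sigma_3)$ $[v]([\lambda x.t]s)\to[\lambda x.[v]t]s$ if $x\notin FV(v)$. The coherence relation $\frown$ on resource terms is the smallest relation such that: $x\frown x$; $\lambda x.s\frown\lambda x.t$ whenever $s\frown t$; $[v_1,\dots,v_k]\frown[v_{k+1},\dots,v_n]$ whenever $v_i\frown v_j$ for all $i,j\le n$; $s_1t_1\frown s_2t_2$ whenever $s_1\frown s_2$ and $t_1\frown t_2$. Resource approximants are the simple terms generated by ($k,n\ge0$): $a::=b\mid c$; $b::=[x^n]\mid[\lambda x.a_1,\dots,\lambda x.a_n]\mid [x]\,b\,a_1\cdots a_k$; $c::=[\lambda x.a]([y]\,b\,a_1\cdots a_k)$, where $[x^n]$ is the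 bag with $n$ copies of $x$. *)

theory Defs
  imports "HOL-Library.Multiset"
begin

text \<open>Call-by-value resource calculus, with variables represented by de Bruijn
  indices (terms are thus taken up to alpha-equivalence).\<close>

datatype rval = Var nat | Lam sterm
     and sterm = App sterm sterm | Bag "rval multiset"

primrec liftv :: "nat \<Rightarrow> rval \<Rightarrow> rval"
  and liftt :: "nat \<Rightarrow> sterm \<Rightarrow> sterm" where
  "liftv k (Var i) = Var (if i < k then i else Suc i)"
| "liftv k (Lam t) = Lam (liftt (Suc k) t)"
| "liftt k (App s t) = App (liftt k s) (liftt k t)"
| "liftt k (Bag M) = Bag (image_mset (liftv k) M)"

text \<open>Linear substitution: \<open>lsubt k vs t t'\<close> means that \<open>t'\<close> is one of the
  ways of linearly substituting the values of the multiset \<open>vs\<close> for the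
  (exactly \<open>size vs\<close>) occurrences of index \<open>k\<close> in \<open>t\<close>, the binder of \<open>k\<close>
  being removed (indices above \<open>k\<close> are decremented).  The values in \<open>vs\<close>
  are already expressed relative to the context at depth \<open>k\<close>.
  Thus \<open>t\<langle>v1,...,vn/x\<rangle>\<close> corresponds to \<open>{t'. lsubt 0 vs t t'}\<close>.\<close>

inductive lsubv :: "nat \<Rightarrow> rval multiset \<Rightarrow> rval \<Rightarrow> rval \<Rightarrow> bool"
  and lsubt :: "nat \<Rightarrow> rval multiset \<Rightarrow> sterm \<Rightarrow> sterm \<Rightarrow> bool" where
  lsub_var_hit: "lsubv k {#v#} (Var k) v"
| lsub_var_other: "i \<noteq> k \<Longrightarrow> lsubv k {#} (Var i) (Var (if i < k then i else i - 1))"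
| lsub_lam: "lsubt (Suc k) (image_mset (liftv 0) vs) t t' \<Longrightarrow> lsubv k vs (Lam t) (Lam t')"
| lsub_app: "lsubt k vs1 s s' \<Longrightarrow> lsubt k vs2 t t' \<Longrightarrow>
     lsubt k (vs1 + vs2) (App s t) (App s' t')"
| lsub_bag_empty: "lsubt k {#} (Bag {#}) (Bag {#})"
| lsub_bag_add: "lsubv k vs1 u u' \<Longrightarrow> lsubt k vs2 (Bag M) (Bag M') \<Longrightarrow>
     lsubt k (vs1 + vs2) (Bag (add_mset u M)) (Bag (add_mset u' M'))"

text \<open>The freshness side conditions of \<open>\<sigma>\<^sub>1\<close>, \<open>\<sigma>\<^sub>3\<close> concern a bound variable and
  are handled by the index lifting (they always hold up to alpha).\<close>

inductive red :: "sterm \<Rightarrow> sterm set \<Rightarrow> bool" where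
  red_beta: "red (App (Bag {#Lam t#}) (Bag vs)) {t'. lsubt 0 vs t t'}"
| red_zero: "size vs \<noteq> 1 \<Longrightarrow> red (App (Bag vs) t) {}"
| red_sigma1: "red (App (App (Bag {#Lam t#}) s1) s2)
     {App (Bag {#Lam (App t (liftt 0 s2))#}) s1}"
| red_sigma3: "red (App (Bag {#v#}) (App (Bag {#Lam t#}) s))
     {App (Bag {#Lam (App (Bag {#liftv 0 v#}) t)#}) s}"
| red_app_l: "red s S \<Longrightarrow> red (App s t) ((\<lambda>s'. App s' t) ` S)"
| red_app_r: "red t T \<Longrightarrow> red (App s t) ((\<lambda>t'. App s t') ` T)"
| red_bag: "red t T \<Longrightarrow> red (Bag (add_mset (Lam t) M)) ((\<lambda>t'. Bag (add_mset (Lam t') M)) ` T)"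

definition r_normal :: "sterm \<Rightarrow> bool" where
  "r_normal t \<longleftrightarrow> \<not> (\<exists>T. red t T)"

inductive cohv :: "rval \<Rightarrow> rval \<Rightarrow> bool"
  and coht :: "sterm \<Rightarrow> sterm \<Rightarrow> bool" where
  coh_var: "cohv (Var x) (Var x)"
| coh_lam: "coht s t \<Longrightarrow> cohv (Lam s) (Lam t)"
| coh_bag: "(\<forall>u\<in>#A + B. \<forall>w\<in>#A + B. cohv u w) \<Longrightarrow> coht (Bag A) (Bag B)"
| coh_app: "coht s1 s2 \<Longrightarrow> coht t1 t2 \<Longrightarrow> coht (App s1 t1) (App s2 t2)"

definition apps :: "sterm \<Rightarrow> sterm list \<Rightarrow> sterm" where
  "apps h as = foldl App h as"

inductive approx_a :: "sterm \<Rightarrow> bool"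
  and approx_b :: "sterm \<Rightarrow> bool"
  and approx_c :: "sterm \<Rightarrow> bool" where
  a_b: "approx_b t \<Longrightarrow> approx_a t"
| a_c: "approx_c t \<Longrightarrow> approx_a t"
| b_vars: "approx_b (Bag (replicate_mset n (Var x)))"
| b_lams: "(\<forall>a\<in>set as. approx_a a) \<Longrightarrow> approx_b (Bag (mset (map Lam as)))"
| b_head: "approx_b b \<Longrightarrow> (\<forall>a\<in>set as. approx_a a) \<Longrightarrow>
     approx_b (apps (App (Bag {#Var x#}) b) as)"
| c_red: "approx_a a \<Longrightarrow> approx_b b \<Longrightarrow> (\<forall>a'\<in>set as. approx_a a') \<Longrightarrow>
     approx_c (App (Bag {#Lam a#}) (apps (App (Bag {#Var y#}) b) as))"

end

theory Submission
  imports Defs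
begin

text \<open>An application is in normal form iff its two components are and it is not
  itself a redex of one of the four rules.  A bag of coherent values consists
  either of copies of a single variable or of abstractions only.  Hence, by
  structural induction, a coherent normal term fits the approximant grammar:
  the absence of 0-redexes forces the head of an application to be a singleton
  bag, the absence of \<open>\<beta>\<^sub>r\<close>- and \<open>\<sigma>\<^sub>3\<close>-redexes forces the argument of an abstraction
  to be a spine headed by a variable, and the absence of \<open>\<sigma>\<^sub>1\<close>-redexes forces a
  nested application to be such a spine.  Conversely no rule of the grammar
  creates a redex, since b-approximants are bags or variable-headed spines.\<close>

inductive root_redex :: "sterm \<Rightarrow> bool" where
  root_beta: "root_redex (App (Bag {#Lam t#}) (Bag vs))"
| root_zero: "size vs \<noteq> 1 \<Longrightarrow> root_redex (App (Bag vs) t)"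
| root_sigma1: "root_redex (App (App (Bag {#Lam t#}) s1) s2)"
| root_sigma3: "root_redex (App (Bag {#v#}) (App (Bag {#Lam t#}) s))"

inductive_cases root_redex_AppE: "root_redex (App s t)"
inductive_cases red_AppE: "red (App s t) T"
inductive_cases red_BagE: "red (Bag M) T"
inductive_cases coht_AppE: "coht (App s t) (App s' t')"
inductive_cases coht_BagE: "coht (Bag A) (Bag B)"
inductive_cases cohv_LamE: "cohv (Lam s) (Lam t)"
inductive_cases cohv_VarE: "cohv (Var x) w"

lemma root_redex_reduces: "root_redex t \<Longrightarrow> \<exists>T. red t T"
  by (induction rule: root_redex.induct) (blast intro: red.intros)+

lemma r_normal_App_iff:
  "r_normal (App s t) \<longleftrightarrow> r_normal s \<and> r_normal t \<and> \<not> root_redex (App s t)"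
proof
  assume "r_normal (App s t)"
  then show "r_normal s \<and> r_normal t \<and> \<not> root_redex (App s t)"
    unfolding r_normal_def using red_app_l red_app_r root_redex_reduces by blast
next
  assume "r_normal s \<and> r_normal t \<and> \<not> root_redex (App s t)"
  then show "r_normal (App s t)"
    unfolding r_normal_def by (auto elim!: red_AppE intro: root_redex.intros)
qed

lemma r_normal_Bag_iff: "r_normal (Bag M) \<longleftrightarrow> (\<forall>u. Lam u \<in># M \<longrightarrow> r_normal u)"
proof
  assume normal: "r_normal (Bag M)"
  show "\<forall>u. Lam u \<in># M \<longrightarrow> r_normal u"
  proof (intro allI impI)
    fix u assume "Lam u \<in># M"
    then have "M = add_mset (Lam u) (M - {#Lam u#})" by simp
    then show "r_normal u"
      using normal red_bag[of u _ "M - {#Lam u#}"] unfolding r_normal_def by metis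
  qed
next
  assume "\<forall>u. Lam u \<in># M \<longrightarrow> r_normal u"
  then show "r_normal (Bag M)"
    unfolding r_normal_def by (auto elim: red_BagE)
qed

lemma apps_Nil [simp]: "apps h [] = h"
  by (simp add: apps_def)

lemma apps_snoc [simp]: "apps h (as @ [a]) = App (apps h as) a"
  by (simp add: apps_def)

lemma apps_App_neq_Bag [simp]: "apps (App h b) as \<noteq> Bag M"
  by (induction as rule: rev_induct) auto

lemma apps_App_eq_App_Bag:
  "apps (App h b) as = App (Bag M) s \<longleftrightarrow> as = [] \<and> h = Bag M \<and> b = s"
  by (cases as rule: rev_cases) auto

lemma apps_Var_neq_App_Lam [simp]:
  "apps (App (Bag {#Var x#}) b) as \<noteq> App (Bag {#Lam u#}) s"
  by (simp add: apps_App_eq_App_Bag)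

lemma approx_b_neq_App_Lam: "approx_b t \<Longrightarrow> t \<noteq> App (Bag {#Lam u#}) s"
  by (induction rule: approx_b.cases) auto

lemma r_normal_Var_spine:
  assumes "r_normal b" and "\<forall>a\<in>set as. r_normal a"
    and "\<And>u s. b \<noteq> App (Bag {#Lam u#}) s"
  shows "r_normal (apps (App (Bag {#Var x#}) b) as)"
  using assms(2)
proof (induction as rule: rev_induct)
  case Nil
  then show ?case
    using assms(1,3) by (auto simp: r_normal_App_iff r_normal_Bag_iff elim!: root_redex_AppE)
next
  case (snoc a as)
  then show ?case
    by (auto simp: r_normal_App_iff apps_App_eq_App_Bag elim: root_redex_AppE)
qed

lemma r_normal_if_approx:
  shows "approx_a t \<Longrightarrow> r_normal t"
    and "approx_b t \<Longrightarrow> r_normal t"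
    and "approx_c t \<Longrightarrow> r_normal t"
proof (induction rule: approx_a_approx_b_approx_c.inducts)
  case (b_vars n x)
  then show ?case by (auto simp: r_normal_Bag_iff split: if_splits)
next
  case (b_lams as)
  then show ?case by (auto simp: r_normal_Bag_iff)
next
  case (b_head b as x)
  then show ?case using r_normal_Var_spine approx_b_neq_App_Lam by blast
next
  case (c_red a b as y)
  then have "r_normal (apps (App (Bag {#Var y#}) b) as)"
    using r_normal_Var_spine approx_b_neq_App_Lam by blast
  with c_red show ?case
    by (auto simp: r_normal_App_iff r_normal_Bag_iff elim: root_redex_AppE)
qed auto

lemma approx_a_cases: "approx_a t \<Longrightarrow> approx_b t \<or> approx_c t"
  by (erule approx_a.cases) auto

lemma approx_c_cases:
  "approx_c t \<Longrightarrow> \<exists>a b as y. t = App (Bag {#Lam a#}) (apps (App (Bag {#Var y#}) b) as)"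
  by (erule approx_c.cases) auto

lemma approx_b_App_cases:
  "approx_b (App s t) \<Longrightarrow>
    \<exists>x b as. App s t = apps (App (Bag {#Var x#}) b) as \<and> approx_b b \<and> (\<forall>a\<in>set as. approx_a a)"
  by (erule approx_b.cases) auto

lemma approx_a_Lam:
  assumes "approx_a (Bag {#Lam u#})"
  shows "approx_a u"
proof -
  have "approx_b (Bag {#Lam u#})"
    using assms approx_a_cases approx_c_cases by blast
  then show ?thesis
  proof (cases rule: approx_b.cases)
    case (b_vars n x)
    then have "Lam u \<in># replicate_mset n (Var x)" by (metis multi_member_last)
    then show ?thesis by (simp split: if_splits)
  next
    case (b_lams as)
    then have "Lam u \<in># mset (map Lam as)" by (metis multi_member_last)
    with b_lams show ?thesis by auto
  qed (metis apps_App_neq_Bag)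
qed

lemma approx_a_App:
  assumes s: "approx_a s" and t: "approx_a t" and normal: "r_normal (App s t)"
  shows "approx_a (App s t)"
proof -
  have no_redex: "\<not> root_redex (App s t)"
    using normal r_normal_App_iff by blast
  show ?thesis
  proof (cases s)
    case (Bag M)
    then obtain w where M: "M = {#w#}"
      using no_redex root_zero size_1_singleton_mset by metis
    have "approx_b t"
      using t no_redex approx_a_cases approx_c_cases Bag M root_sigma3 by metis
    show ?thesis
    proof (cases w)
      case (Var x)
      have "approx_b (apps (App (Bag {#Var x#}) t) [])"
        using \<open>approx_b t\<close> by (intro b_head) auto
      with Bag M Var show ?thesis by (simp add: a_b)
    next
      case (Lam u)
      have "\<nexists>N. t = Bag N"
        using no_redex root_beta Bag M Lam by blast
      then obtain y b as where "t = apps (App (Bag {#Var y#}) b) as"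
        and "approx_b b" and "\<forall>a\<in>set as. approx_a a"
        using \<open>approx_b t\<close> approx_b_App_cases by (cases t) blast+
      moreover have "approx_a u"
        using s Bag M Lam approx_a_Lam by simp
      ultimately show ?thesis
        using Bag M Lam c_red a_c by metis
    qed
  next
    case (App s1 s2)
    have "approx_b s"
      using s no_redex approx_a_cases approx_c_cases App root_sigma1 by metis
    then obtain x b as where "s = apps (App (Bag {#Var x#}) b) as"
      and "approx_b b" and "\<forall>a\<in>set as. approx_a a"
      using App approx_b_App_cases by blast
    moreover have "approx_b (apps (App (Bag {#Var x#}) b) (as @ [t]))"
      using calculation t by (intro b_head) auto
    ultimately show ?thesis by (simp add: a_b)
  qed
qed

lemma approx_a_Bag:
  assumes coherent: "\<forall>v\<in>#M. \<forall>w\<in>#M. cohv v w"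
    and bodies: "\<And>u. Lam u \<in># M \<Longrightarrow> approx_a u"
  shows "approx_a (Bag M)"
proof (cases "\<exists>x. Var x \<in># M")
  case True
  then obtain x where "Var x \<in># M" by blast
  with coherent have "set_mset M \<subseteq> {Var x}" by (auto elim: cohv_VarE)
  then have "M = replicate_mset (size M) (Var x)"
    by (rule set_mset_subset_singletonD)
  then show ?thesis by (metis b_vars a_b)
next
  case False
  obtain ws where ws: "M = mset ws" using ex_mset by metis
  define as where "as = map (\<lambda>w. case w of Lam u \<Rightarrow> u | Var _ \<Rightarrow> Bag {#}) ws"
  have "map Lam as = ws"
    unfolding as_def using False ws
    by (induction ws arbitrary: M) (auto split: rval.splits)
  then have "M = mset (map Lam as)" using ws by simp
  moreover have "\<forall>a\<in>set as. approx_a a"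
    using bodies calculation by auto
  ultimately show ?thesis by (metis b_lams a_b)
qed

lemma approx_if_coherent_normal: "coht t t \<Longrightarrow> r_normal t \<Longrightarrow> approx_a t"
proof (induction t rule: sterm.induct[where
      ?P1.0 = "\<lambda>v. \<forall>u. v = Lam u \<longrightarrow> coht u u \<longrightarrow> r_normal u \<longrightarrow> approx_a u"])
  case (App s t)
  then show ?case
    using approx_a_App r_normal_App_iff by (auto elim: coht_AppE)
next
  case (Bag M)
  have coherent: "\<forall>v\<in>#M. \<forall>w\<in>#M. cohv v w"
    using Bag.prems(1) by (auto elim: coht_BagE)
  show ?case
  proof (rule approx_a_Bag[OF coherent])
    fix u assume "Lam u \<in># M"
    moreover have "coht u u"
      using coherent calculation by (auto elim: cohv_LamE)
    moreover have "r_normal u"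
      using Bag.prems(2) calculation r_normal_Bag_iff by blast
    ultimately show "approx_a u" using Bag.hyps by blast
  qed
qed auto

theorem lemma3p16:
  fixes t :: sterm
  assumes "coht t t"
  shows "r_normal t \<longleftrightarrow> approx_a t"
  using approx_if_coherent_normal[OF assms] r_normal_if_approx(1) by blast

end
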